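(* Let $n\ge 3$. A polygon $Q\in\mathbf S(s_1,\dots,s_n)$ is a critical point of the restriction of $\mathcal P$ to the smooth manifold $\mathbf S(s_1,\dots,s_n)$ if and only if $Q$ is tangential.
   Context: Fix $n\ge 3$ pairwise non-parallel lines $s_1,\dots,s_n\subset\mathbb{R}^2$ through the origin, each with a fixed direction $\vec s_i$. For lines $e_i\parallel s_i$, $Q=Q(e_1,\dots,e_n)$ is the closed polygon with consecutive vertices $v_i=e_i\cap e_{i+1}$ (indices mod $n$), and $\widetilde{\mathbf S}(s_1,\dots,s_n)$ is the space of such polygons modulo translations. Oriented area: $\mathcal A=\frac12\sum_i(x_iy_{i+1}-x_{i+1}y_i)$ for vertices $v_i=(x_i,y_i)$. $\mathbf S(s_1,\dots,s_n)=\{Q\in\widetilde{\mathbf S}:|\mathcal A(Q)|=1\}$. Each $e_i$ is oriented along $\vec s_i$, giving $\vec e_i$; the perimeter is $\mathcal P(Q)=\sum_i\operatorname{sign}_Q(i)|v_iv_{i+1}|$ with $\operatorname{sign}_Q(i)=1$ if $\vec e_i$ is codirected with $\overrightarrow{v_iv_{i+1}}$ and $-1$ otherwise (a linear function on $\widetilde{\mathbf S}$). $Q$ is tangential if there is a circle $\sigma$ tangent to every $e_i$ such that either $\sigma$ lies to the left of all $\vec e_i$ or $\sigma$ lies to the right of all $\vec e_i$. *)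

theory Defs
  imports "HOL-Analysis.Analysis"
begin

text \<open>Planar points are pairs of reals (the product norm is Euclidean).
  cross a b is the 2D cross product (determinant of the matrix with columns a, b).\<close>
definition cross :: "real \<times> real \<Rightarrow> real \<times> real \<Rightarrow> real" where
  "cross a b = fst a * snd b - snd a * fst b"

text \<open>Every line parallel to
  the line through 0 with direction d (d nonzero) is of this form for a unique c.
  It is oriented along d; its left side is the set where cross d x > c.\<close>
definition line :: "real \<times> real \<Rightarrow> real \<Rightarrow> (real \<times> real) set" where
  "line d c = {x. cross d x = c}"

text \<open>A configuration: n, directions d i (i < n), offsets h i, so e_i = line (d i) (h i).
  Vertex v_i = e_i \<inter> e_(i+1), indices mod n.\<close>
definition vertex :: "nat \<Rightarrow> (nat \<Rightarrow> real \<times> real) \<Rightarrow> (nat \<Rightarrow> real) \<Rightarrow> nat \<Rightarrow> real \<times> real" where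
  "vertex n d h i = (THE v. v \<in> line (d (i mod n)) (h (i mod n))
                            \<inter> line (d (Suc i mod n)) (h (Suc i mod n)))"

text \<open>Oriented area (shoelace formula).\<close>
definition area :: "nat \<Rightarrow> (nat \<Rightarrow> real \<times> real) \<Rightarrow> (nat \<Rightarrow> real) \<Rightarrow> real" where
  "area n d h = (1/2) * (\<Sum>i<n. fst (vertex n d h i) * snd (vertex n d h (Suc i))
                               - fst (vertex n d h (Suc i)) * snd (vertex n d h i))"

text \<open>The side of Q lying on e_i is the segment from v_(i-1) to v_i.  Its sign is 1
  if the oriented line e_i (direction d i) is codirected with that segment, else -1.\<close>
definition side_sign :: "nat \<Rightarrow> (nat \<Rightarrow> real \<times> real) \<Rightarrow> (nat \<Rightarrow> real) \<Rightarrow> nat \<Rightarrow> real" where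
  "side_sign n d h i =
     (if \<exists>c>0. vertex n d h i - vertex n d h (i + n - 1) = c *\<^sub>R d i then 1 else -1)"

definition perimeter :: "nat \<Rightarrow> (nat \<Rightarrow> real \<times> real) \<Rightarrow> (nat \<Rightarrow> real) \<Rightarrow> real" where
  "perimeter n d h = (\<Sum>i<n. side_sign n d h i * dist (vertex n d h (i + n - 1)) (vertex n d h i))"

definition tangent_circle_line :: "real \<times> real \<Rightarrow> real \<Rightarrow> (real \<times> real) set \<Rightarrow> bool" where
  "tangent_circle_line c r L \<longleftrightarrow> (\<exists>!p. p \<in> sphere c r \<inter> L)"

definition tangential :: "nat \<Rightarrow> (nat \<Rightarrow> real \<times> real) \<Rightarrow> (nat \<Rightarrow> real) \<Rightarrow> bool" where
  "tangential n d h \<longleftrightarrow>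
     (\<exists>c r. r > 0 \<and> (\<forall>i<n. tangent_circle_line c r (line (d i) (h i))) \<and>
        ((\<forall>i<n. sphere c r \<subseteq> {x. cross (d i) x \<ge> h i}) \<or>
         (\<forall>i<n. sphere c r \<subseteq> {x. cross (d i) x \<le> h i})))"

text \<open>Critical point of the perimeter restricted to the level set |area| = 1:
  the derivative of the perimeter vanishes along every curve through h that
  stays (near t = 0) in the level set and is differentiable at 0.\<close>
definition critical_point :: "nat \<Rightarrow> (nat \<Rightarrow> real \<times> real) \<Rightarrow> (nat \<Rightarrow> real) \<Rightarrow> bool" where
  "critical_point n d h \<longleftrightarrow>
     (\<forall>\<gamma> :: real \<Rightarrow> nat \<Rightarrow> real.
        (\<forall>i<n. \<gamma> 0 i = h i) \<longrightarrow>
        (\<forall>i<n. (\<lambda>t. \<gamma> t i) differentiable (at 0)) \<longrightarrow>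
        eventually (\<lambda>t. \<bar>area n d (\<gamma> t)\<bar> = 1) (nhds 0) \<longrightarrow>
        ((\<lambda>t. perimeter n d (\<gamma> t)) has_real_derivative 0) (at 0))"

end

theory Submission
  imports Defs
begin

text \<open>Everything is linear algebra in the offsets h of the lines.  The vertices depend linearly on h,
  hence so does the signed length c_j(h) of each side (v_j - v_(j-1) = c_j(h) d_j).  The perimeter
  is the linear form \<Sum> c_j(h) |d_j| and the area is the quadratic form of the symmetric bilinear
  form Q(h,k) = -1/2 \<Sum> c_j(h) k_j, whose kernel consists of the translations
  h_j = d_j \<times> \<tau>.  Moreover P(k) = -2 Q(k, |d|), and h is tangential iff h = translation + \<mu> |d|
  with \<mu> \<noteq> 0.  By the Lagrange condition, h is critical iff P is proportional to Q(h, -) on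
  the whole space, i.e. iff 2|d| + \<lambda> h lies in the kernel of Q for some \<lambda>; the case \<lambda> = 0
  is excluded because no point has signed distance 1 from three pairwise non-parallel lines
  through the origin.\<close>

section \<open>Planar cross product\<close>

lemma cross_diff_right: "cross a (x - y) = cross a x - cross a y"
  and cross_add_right: "cross a (x + y) = cross a x + cross a y"
  and cross_scaleR_right: "cross a (c *\<^sub>R x) = c * cross a x"
  and cross_diff_left: "cross (x - y) a = cross x a - cross y a"
  and cross_scaleR_left: "cross (c *\<^sub>R a) x = c * cross a x"
  and cross_minus_left: "cross (- a) x = - cross a x"
  and cross_commute: "cross a b = - cross b a"
  and cross_self: "cross a a = 0"
  by (auto simp: cross_def algebra_simps)

lemma norm_Pair_sq: "(norm (x::real \<times> real))\<^sup>2 = (fst x)\<^sup>2 + (snd x)\<^sup>2"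
  by (cases x) (simp add: norm_Pair)

lemma cross_sq_add_inner_sq: "(cross a y)\<^sup>2 + (a \<bullet> y)\<^sup>2 = (norm a)\<^sup>2 * (norm y)\<^sup>2"
  unfolding norm_Pair_sq by (simp add: cross_def inner_prod_def power2_eq_square algebra_simps)

lemma abs_cross_le: "\<bar>cross a y\<bar> \<le> norm a * norm y"
proof -
  have "(cross a y)\<^sup>2 \<le> (norm a)\<^sup>2 * (norm y)\<^sup>2"
    using cross_sq_add_inner_sq[of a y] zero_le_power2[of "a \<bullet> y"] by linarith
  then have "(cross a y)\<^sup>2 \<le> (norm a * norm y)\<^sup>2"
    by (simp add: power_mult_distrib)
  then show ?thesis
    using abs_le_square_iff[of "cross a y" "norm a * norm y"] by simp
qed

lemma eq_0_if_cross_eq_0_inner_eq_0: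
  assumes "cross a z = 0" "a \<bullet> z = 0" "a \<noteq> 0"
  shows "z = 0"
  using cross_sq_add_inner_sq[of a z] assms by simp

lemma eq_0_if_cross_eq_0_cross_eq_0:
  assumes "cross a z = 0" "cross b z = 0" "cross a b \<noteq> 0"
  shows "z = 0"
proof -
  obtain a1 a2 b1 b2 z1 z2 where e: "a = (a1,a2)" "b = (b1,b2)" "z = (z1,z2)"
    by (cases a, cases b, cases z) auto
  have h: "a1*z2 - a2*z1 = 0" "b1*z2 - b2*z1 = 0" "a1*b2 - a2*b1 \<noteq> 0"
    using assms by (auto simp: e cross_def)
  have "z1 * (a1*b2 - a2*b1) = 0" "z2 * (a1*b2 - a2*b1) = 0"
    using h by algebra+
  then show ?thesis using h(3) by (simp add: e zero_prod_def)
qed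

lemma cross_eqs_iff:
  assumes "cross a b \<noteq> 0"
  shows "cross a x = p \<and> cross b x = q \<longleftrightarrow> x = (1 / cross a b) *\<^sub>R (p *\<^sub>R b - q *\<^sub>R a)"
proof -
  let ?y = "(1 / cross a b) *\<^sub>R (p *\<^sub>R b - q *\<^sub>R a)"
  have y: "cross a ?y = p" "cross b ?y = q"
    using assms by (auto simp: cross_scaleR_right cross_diff_right cross_self
        cross_commute[of b a] field_simps)
  have "x = ?y" if "cross a x = p" "cross b x = q"
    using eq_0_if_cross_eq_0_cross_eq_0[of a "x - ?y" b] that y assms
    by (simp add: cross_diff_right)
  with y show ?thesis by auto
qed

lemma parallel_eq_scaleR:
  assumes "cross a w = 0" "a \<noteq> 0"
  shows "w = ((w \<bullet> a) / (norm a)\<^sup>2) *\<^sub>R a"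
proof -
  obtain a1 a2 w1 w2 where e: "a = (a1,a2)" "w = (w1,w2)" by (cases a, cases w) auto
  have n: "(norm a)\<^sup>2 = a1\<^sup>2 + a2\<^sup>2" by (simp add: norm_Pair_sq e)
  have nz: "a1\<^sup>2 + a2\<^sup>2 \<noteq> 0" using assms(2) n by fastforce
  have h: "a1*w2 - a2*w1 = 0" using assms by (simp add: e cross_def)
  have "w1 * (a1\<^sup>2 + a2\<^sup>2) = (w1*a1 + w2*a2) * a1" "w2 * (a1\<^sup>2 + a2\<^sup>2) = (w1*a1 + w2*a2) * a2"
    using h by algebra+
  then show ?thesis using nz n unfolding e by (simp add: field_simps)
qed

definition rot90 :: "real \<times> real \<Rightarrow> real \<times> real" where
  "rot90 a = (- snd a, fst a)"

lemma cross_rot90: "cross a (rot90 a) = (norm a)\<^sup>2"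
  and norm_rot90: "norm (rot90 a) = norm a"
  by (cases a, simp add: rot90_def cross_def norm_Pair_sq power2_eq_square norm_Pair)+

lemma inner_rot90: "a \<bullet> rot90 a = 0"
  by (cases a) (simp add: rot90_def)

section \<open>Circles and oriented lines\<close>

lemma abs_cross_diff_le_on_sphere:
  assumes "x \<in> sphere c r"
  shows "\<bar>cross a x - cross a c\<bar> \<le> norm a * r"
proof -
  have "norm (x - c) = r" using assms by (simp add: dist_norm norm_minus_commute)
  then show ?thesis using abs_cross_le[of a "x - c"] by (simp add: cross_diff_right)
qed

lemma extremal_point_on_sphere:
  assumes "a \<noteq> 0"
  shows "c + (m / norm a) *\<^sub>R rot90 a \<in> sphere c \<bar>m\<bar>"
    and "cross a (c + (m / norm a) *\<^sub>R rot90 a) = cross a c + m * norm a"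
  using assms by (simp_all add: dist_norm norm_rot90 cross_add_right cross_scaleR_right
      cross_rot90 power2_eq_square)

lemma extremal_point_on_sphere_unique:
  assumes "a \<noteq> 0" "p \<in> sphere c \<bar>m\<bar>" "cross a p = cross a c + m * norm a"
  shows "p = c + (m / norm a) *\<^sub>R rot90 a"
proof -
  define y where "y = p - c"
  have ny: "norm y = \<bar>m\<bar>" using assms(2) by (simp add: y_def dist_norm norm_minus_commute)
  have cy: "cross a y = m * norm a" using assms(3) by (simp add: y_def cross_diff_right)
  have "(a \<bullet> y)\<^sup>2 = 0"
    using cross_sq_add_inner_sq[of a y] unfolding ny cy by (simp add: power_mult_distrib)
  then have "a \<bullet> y = 0" by simp
  define z where "z = y - (m / norm a) *\<^sub>R rot90 a"
  have "cross a z = 0" "a \<bullet> z = 0"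
    using assms(1) cy \<open>a \<bullet> y = 0\<close>
    by (simp_all add: z_def cross_diff_right cross_scaleR_right cross_rot90 inner_diff_right
        inner_rot90 power2_eq_square)
  then have "z = 0" using eq_0_if_cross_eq_0_inner_eq_0 assms(1) by blast
  then show ?thesis by (simp add: z_def y_def algebra_simps)
qed

lemma tangent_circle_line_offset:
  assumes "a \<noteq> 0"
  shows "tangent_circle_line c \<bar>m\<bar> (line a (cross a c + m * norm a))"
  unfolding tangent_circle_line_def line_def
  using extremal_point_on_sphere[OF assms] extremal_point_on_sphere_unique[OF assms]
  by (intro ex1I[of _ "c + (m / norm a) *\<^sub>R rot90 a"]) auto

lemma tangent_circle_line_abs_le:
  assumes "tangent_circle_line c r (line a k)"
  shows "\<bar>cross a c - k\<bar> \<le> norm a * r"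
proof -
  obtain p where "p \<in> sphere c r" "cross a p = k"
    using assms unfolding tangent_circle_line_def line_def by blast
  then show ?thesis using abs_cross_diff_le_on_sphere[of p c r a] by simp
qed

lemma sphere_subset_upper_halfplane_iff:
  assumes "a \<noteq> 0" "r \<ge> 0"
  shows "sphere c r \<subseteq> {x. k \<le> cross a x} \<longleftrightarrow> k \<le> cross a c - norm a * r"
proof
  assume sub: "sphere c r \<subseteq> {x. k \<le> cross a x}"
  have "\<bar>- r\<bar> = r" using assms(2) by simp
  then have "c + (- r / norm a) *\<^sub>R rot90 a \<in> sphere c r"
    using extremal_point_on_sphere(1)[OF assms(1), of c "- r"] by metis
  then have "k \<le> cross a (c + (- r / norm a) *\<^sub>R rot90 a)" using sub by blast
  then show "k \<le> cross a c - norm a * r"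
    unfolding extremal_point_on_sphere(2)[OF assms(1)] by (simp add: mult.commute)
next
  assume "k \<le> cross a c - norm a * r"
  then show "sphere c r \<subseteq> {x. k \<le> cross a x}"
    using abs_cross_diff_le_on_sphere[of _ c r a] by (force simp: abs_le_iff)
qed

lemma sphere_subset_lower_halfplane_iff:
  assumes "a \<noteq> 0" "r \<ge> 0"
  shows "sphere c r \<subseteq> {x. cross a x \<le> k} \<longleftrightarrow> cross a c + norm a * r \<le> k"
  using sphere_subset_upper_halfplane_iff[of "- a" r c "- k"] assms
  by (auto simp: cross_minus_left)

section \<open>Linear functionals of the offsets\<close>

lemma linear_local_eq_sum:
  fixes F :: "(nat \<Rightarrow> real) \<Rightarrow> real"
  assumes lin: "\<And>h k x y. F (\<lambda>i. x * h i + y * k i) = x * F h + y * F k"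
    and local: "\<And>h k. \<forall>i<n. h i = k i \<Longrightarrow> F h = F k"
  shows "F h = (\<Sum>i<n. h i * F (\<lambda>j. if j = i then 1 else 0))"
proof -
  define e where "e i = (\<lambda>j::nat. if j = i then (1::real) else 0)" for i :: nat
  have sum: "F (\<lambda>j. \<Sum>i\<in>S. h i * e i j) = (\<Sum>i\<in>S. h i * F (e i))" if "finite S" for S
    using that
  proof (induction S rule: finite_induct)
    case empty
    then show ?case using lin[of 0 "\<lambda>i. 0" 0 "\<lambda>i. 0"] by simp
  next
    case (insert a S)
    have "F (\<lambda>j. \<Sum>i\<in>insert a S. h i * e i j) = F (\<lambda>j. h a * e a j + 1 * (\<Sum>i\<in>S. h i * e i j))"
      using insert by simp
    also have "\<dots> = h a * F (e a) + 1 * F (\<lambda>j. \<Sum>i\<in>S. h i * e i j)" by (rule lin)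
    finally show ?case using insert by simp
  qed
  have "(\<Sum>i<n. h i * e i j) = h j" if "j < n" for j
    using that by (simp add: e_def if_distrib[of "(*) _"] cong: if_cong)
  then have "F h = F (\<lambda>j. \<Sum>i<n. h i * e i j)" by (intro local) simp
  also have "\<dots> = (\<Sum>i<n. h i * F (e i))" by (rule sum) simp
  finally show ?thesis by (simp add: e_def)
qed

lemma has_real_derivative_linear_local:
  fixes F :: "(nat \<Rightarrow> real) \<Rightarrow> real"
  assumes lin: "\<And>h k x y. F (\<lambda>i. x * h i + y * k i) = x * F h + y * F k"
    and local: "\<And>h k. \<forall>i<n. h i = k i \<Longrightarrow> F h = F k"
    and der: "\<forall>i<n. ((\<lambda>t. \<gamma> t i) has_real_derivative g i) (at 0)"
  shows "((\<lambda>t. F (\<gamma> t)) has_real_derivative F g) (at 0)"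
proof -
  define E where "E i = F (\<lambda>j. if j = i then 1 else 0)" for i
  have "F h = (\<Sum>i<n. h i * E i)" for h
    unfolding E_def by (rule linear_local_eq_sum[OF lin local])
  then show ?thesis
    using der by (auto intro!: DERIV_sum DERIV_cmult_right)
qed

lemma sum_periodic_shift:
  fixes F :: "nat \<Rightarrow> real"
  assumes "\<And>j. F (j mod n) = F j"
  shows "(\<Sum>j<n. F (j + m)) = (\<Sum>j<n. F j)"
proof (induction m)
  case (Suc m)
  have "F (n + m) = F m" by (metis assms mod_add_self1)
  then have "(\<Sum>j<n. F (Suc j + m)) = (\<Sum>j<n. F (j + m))"
    using sum.lessThan_Suc_shift[of "\<lambda>j. F (j + m)" n] by simp
  then show ?case using Suc by simp
qed simp

section \<open>Vertices, side lengths and area as functions of the offsets\<close>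

locale nonparallel_directions =
  fixes n :: nat and d :: "nat \<Rightarrow> real \<times> real"
  assumes n_ge_3: "n \<ge> 3"
    and direction_nonzero: "\<forall>i<n. d i \<noteq> 0"
    and directions_nonparallel: "\<forall>i<n. \<forall>j<n. i \<noteq> j \<longrightarrow> cross (d i) (d j) \<noteq> 0"
begin

abbreviation V :: "(nat \<Rightarrow> real) \<Rightarrow> nat \<Rightarrow> real \<times> real" where
  "V h j \<equiv> vertex n d h j"

lemma cross_consecutive_nonzero: "cross (d (j mod n)) (d (Suc j mod n)) \<noteq> 0"
proof -
  have "j mod n < n" using n_ge_3 by simp
  then have "j mod n \<noteq> Suc j mod n" "Suc j mod n < n"
    using n_ge_3 by (auto simp: mod_Suc Suc_lessI)
  with \<open>j mod n < n\<close> show ?thesis using directions_nonparallel by blast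
qed

lemma vertex_eq:
  "V h j = (1 / cross (d (j mod n)) (d (Suc j mod n))) *\<^sub>R
      (h (j mod n) *\<^sub>R d (Suc j mod n) - h (Suc j mod n) *\<^sub>R d (j mod n))"
  unfolding vertex_def line_def
  by (rule the_equality) (use cross_eqs_iff[OF cross_consecutive_nonzero] in auto)

lemma cross_vertex:
  assumes "j < n"
  shows "cross (d j) (V h j) = h j" and "cross (d j) (V h (j + n - 1)) = h j"
proof -
  have V: "cross (d (i mod n)) (V h i) = h (i mod n) \<and> cross (d (Suc i mod n)) (V h i) = h (Suc i mod n)"
    for i using cross_eqs_iff[OF cross_consecutive_nonzero] vertex_eq by blast
  show "cross (d j) (V h j) = h j" using V[of j] assms by simp
  have "Suc (j + n - 1) mod n = j" using assms n_ge_3 by simp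
  then show "cross (d j) (V h (j + n - 1)) = h j" using V[of "j + n - 1"] by simp
qed

lemma vertex_mod: "V h (j mod n) = V h j"
  unfolding vertex_def by (simp add: mod_Suc_eq)

lemma vertex_add_n: "V h (j + n) = V h j"
  by (metis vertex_mod mod_add_self2)

lemma vertex_linear: "V (\<lambda>i. x * h i + y * k i) j = x *\<^sub>R V h j + y *\<^sub>R V k j"
  unfolding vertex_eq by (simp add: algebra_simps)

lemma vertex_cong: "\<forall>i<n. h i = k i \<Longrightarrow> V h j = V k j"
  unfolding vertex_eq using n_ge_3 by simp

lemma vertex_translation: "V (\<lambda>i. cross (d i) \<tau>) j = \<tau>"
  unfolding vertex_eq
  using cross_eqs_iff[OF cross_consecutive_nonzero[of j], of \<tau> "cross (d (j mod n)) \<tau>"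
      "cross (d (Suc j mod n)) \<tau>"]
  by simp

text \<open>V h (j + n - 1) is the previous vertex v_(j-1); the side v_(j-1) v_j lies on e_j, and
  side_coeff h j is its signed length in units of norm (d j).\<close>
definition side_coeff :: "(nat \<Rightarrow> real) \<Rightarrow> nat \<Rightarrow> real" where
  "side_coeff h j = ((V h j - V h (j + n - 1)) \<bullet> d j) / (norm (d j))\<^sup>2"

lemma side_eq: "j < n \<Longrightarrow> V h j - V h (j + n - 1) = side_coeff h j *\<^sub>R d j"
  unfolding side_coeff_def
  by (rule parallel_eq_scaleR) (use cross_vertex[of j h] direction_nonzero in \<open>auto simp: cross_diff_right\<close>)

lemma side_coeff_linear: "side_coeff (\<lambda>i. x * h i + y * k i) j = x * side_coeff h j + y * side_coeff k j"
  unfolding side_coeff_def vertex_linear by (simp add: divide_inverse algebra_simps)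

lemma side_coeff_cong: "\<forall>i<n. h i = k i \<Longrightarrow> side_coeff h j = side_coeff k j"
  unfolding side_coeff_def using vertex_cong[of h k] by simp

lemma side_coeff_translation: "j < n \<Longrightarrow> side_coeff (\<lambda>i. cross (d i) \<tau>) j = 0"
  using side_eq[of j "\<lambda>i. cross (d i) \<tau>"] direction_nonzero by (simp add: vertex_translation)

lemma perimeter_eq: "perimeter n d h = (\<Sum>j<n. side_coeff h j * norm (d j))"
  unfolding perimeter_def
proof (rule sum.cong[OF refl])
  fix j assume "j \<in> {..<n}"
  then have j: "j < n" by simp
  have "dist (V h (j + n - 1)) (V h j) = \<bar>side_coeff h j\<bar> * norm (d j)"
    using side_eq[OF j, of h] by (simp add: dist_norm norm_minus_commute)
  moreover have "side_sign n d h j = (if side_coeff h j > 0 then 1 else -1)"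
    unfolding side_sign_def side_eq[OF j] using direction_nonzero j by auto
  ultimately show "side_sign n d h j * dist (V h (j + n - 1)) (V h j) = side_coeff h j * norm (d j)"
    by auto
qed

lemma sum_vertex_shift:
  fixes f :: "real \<times> real \<Rightarrow> real \<times> real \<Rightarrow> real"
  shows "(\<Sum>j<n. f (V h (j + n - 1)) (V k (j + n - 1))) = (\<Sum>j<n. f (V h j) (V k j))"
proof -
  have "(\<Sum>j<n. f (V h (j + n - 1)) (V k (j + n - 1))) = (\<Sum>j<n. f (V h (j + (n - 1))) (V k (j + (n - 1))))"
    using n_ge_3 by (intro sum.cong) auto
  also have "\<dots> = (\<Sum>j<n. f (V h j) (V k j))"
    by (rule sum_periodic_shift[where F="\<lambda>j. f (V h j) (V k j)"]) (simp add: vertex_mod)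
  finally show ?thesis .
qed

definition area_form :: "(nat \<Rightarrow> real) \<Rightarrow> (nat \<Rightarrow> real) \<Rightarrow> real" where
  "area_form h k = -1/2 * (\<Sum>j<n. side_coeff h j * k j)"

lemma area_eq_area_form: "area n d h = area_form h h"
proof -
  have "area n d h = 1/2 * (\<Sum>j<n. cross (V h j) (V h (Suc j)))"
    unfolding area_def cross_def by (simp add: algebra_simps)
  also have "(\<Sum>j<n. cross (V h j) (V h (Suc j))) = (\<Sum>j<n. cross (V h (j + (n - 1))) (V h (Suc (j + (n - 1)))))"
    by (rule sum_periodic_shift[symmetric]) (metis vertex_mod mod_Suc_eq)
  also have "\<dots> = (\<Sum>j<n. - (side_coeff h j * h j))"
  proof (rule sum.cong[OF refl])
    fix j assume "j \<in> {..<n}"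
    then have j: "j < n" by simp
    have idx: "j + (n - 1) = j + n - 1" "Suc (j + n - 1) = j + n" using n_ge_3 by auto
    have "V h j = V h (j + n - 1) + side_coeff h j *\<^sub>R d j"
      using side_eq[OF j, of h] by (simp add: algebra_simps)
    then have "cross (V h (j + n - 1)) (V h j) = side_coeff h j * cross (V h (j + n - 1)) (d j)"
      by (simp add: cross_add_right cross_scaleR_right cross_self)
    also have "\<dots> = - (side_coeff h j * h j)"
      using cross_vertex(2)[OF j, of h] cross_commute[of "V h (j + n - 1)" "d j"] by simp
    finally show "cross (V h (j + (n - 1))) (V h (Suc (j + (n - 1)))) = - (side_coeff h j * h j)"
      unfolding idx vertex_add_n .
  qed
  finally show ?thesis unfolding area_form_def by (simp add: sum_negf)
qed

lemma area_form_symmetric: "area_form h k = area_form k h"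
proof -
  have hk: "(\<Sum>j<n. side_coeff h j * k j) =
      (\<Sum>j<n. cross (V h j) (V k j)) - (\<Sum>j<n. cross (V h (j + n - 1)) (V k j))"
    unfolding sum_subtractf[symmetric]
  proof (rule sum.cong[OF refl])
    fix j assume "j \<in> {..<n}"
    then have j: "j < n" by simp
    have "side_coeff h j * k j = cross (V h j - V h (j + n - 1)) (V k j)"
      using cross_vertex(1)[OF j, of k] side_eq[OF j, of h] by (simp add: cross_scaleR_left)
    then show "side_coeff h j * k j = cross (V h j) (V k j) - cross (V h (j + n - 1)) (V k j)"
      by (simp add: cross_diff_left)
  qed
  have kh: "(\<Sum>j<n. side_coeff k j * h j) =
      (\<Sum>j<n. cross (V k j) (V h (j + n - 1))) - (\<Sum>j<n. cross (V k (j + n - 1)) (V h (j + n - 1)))"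
    unfolding sum_subtractf[symmetric]
  proof (rule sum.cong[OF refl])
    fix j assume "j \<in> {..<n}"
    then have j: "j < n" by simp
    have "side_coeff k j * h j = cross (V k j - V k (j + n - 1)) (V h (j + n - 1))"
      using cross_vertex(2)[OF j, of h] side_eq[OF j, of k] by (simp add: cross_scaleR_left)
    then show "side_coeff k j * h j = cross (V k j) (V h (j + n - 1)) - cross (V k (j + n - 1)) (V h (j + n - 1))"
      by (simp add: cross_diff_left)
  qed
  have "(\<Sum>j<n. cross (V k (j + n - 1)) (V h (j + n - 1))) = - (\<Sum>j<n. cross (V h j) (V k j))"
    unfolding sum_vertex_shift[of cross] sum_negf[symmetric] by (metis cross_commute)
  moreover have "(\<Sum>j<n. cross (V k j) (V h (j + n - 1))) = - (\<Sum>j<n. cross (V h (j + n - 1)) (V k j))"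
    unfolding sum_negf[symmetric] by (metis cross_commute)
  ultimately show ?thesis unfolding area_form_def hk kh by simp
qed

lemma area_form_linear_left: "area_form (\<lambda>i. x * h i + y * k i) m = x * area_form h m + y * area_form k m"
  unfolding area_form_def side_coeff_linear by (simp add: algebra_simps sum.distrib sum_distrib_left)

lemma area_form_linear_right: "area_form m (\<lambda>i. x * h i + y * k i) = x * area_form m h + y * area_form m k"
  using area_form_linear_left area_form_symmetric by metis

lemma area_form_cong_left: "\<forall>i<n. h i = k i \<Longrightarrow> area_form h m = area_form k m"
  unfolding area_form_def using side_coeff_cong[of h k] by simp

lemma area_form_translation: "area_form (\<lambda>i. cross (d i) \<tau>) k = 0"
  unfolding area_form_def using side_coeff_translation by simp

lemma perimeter_eq_area_form: "perimeter n d h = -2 * area_form h (\<lambda>j. norm (d j))"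
  unfolding area_form_def perimeter_eq by simp

lemma perimeter_linear: "perimeter n d (\<lambda>i. x * h i + y * k i) = x * perimeter n d h + y * perimeter n d k"
  unfolding perimeter_eq_area_form area_form_linear_left by simp

lemma perimeter_cong: "\<forall>i<n. h i = k i \<Longrightarrow> perimeter n d h = perimeter n d k"
  unfolding perimeter_eq_area_form using area_form_cong_left by metis

lemma area_scaleR: "area n d (\<lambda>i. r * h i) = r\<^sup>2 * area n d h"
  using area_form_linear_left[of r h 0 h "\<lambda>i. r * h i"] area_form_linear_right[of h r h 0 h]
  by (simp add: area_eq_area_form power2_eq_square)

lemma area_cong: "\<forall>i<n. h i = k i \<Longrightarrow> area n d h = area n d k"
  unfolding area_def using vertex_cong[of h k] by simp

lemma area_add_scaled:
  "area n d (\<lambda>i. h i + t * k i) = area n d h + 2 * t * area_form h k + t\<^sup>2 * area n d k"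
  using area_form_linear_left[of 1 h t k "\<lambda>i. h i + t * k i"]
    area_form_linear_right[of h 1 h t k] area_form_linear_right[of k 1 h t k]
    area_form_symmetric[of k h]
  by (simp add: area_eq_area_form power2_eq_square algebra_simps)

lemma area_form_eq_0_imp_translation:
  assumes "\<And>v. area_form u v = 0"
  obtains \<tau> where "\<forall>j<n. u j = cross (d j) \<tau>"
proof -
  have "(\<Sum>j<n. (side_coeff u j)\<^sup>2) = 0"
    using assms[of "side_coeff u"] unfolding area_form_def by (simp add: power2_eq_square)
  then have side0: "\<forall>j<n. side_coeff u j = 0" by (simp add: sum_nonneg_eq_0_iff)
  have "j < n \<longrightarrow> V u j = V u 0" for j
  proof (induction j)
    case (Suc j)
    show ?case
    proof
      assume j: "Suc j < n"
      have "V u (Suc j) = V u (Suc j + n - 1)" using side_eq[OF j, of u] side0 j by simp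
      then show "V u (Suc j) = V u 0" using Suc j vertex_add_n[of u j] by simp
    qed
  qed simp
  then have "\<forall>j<n. u j = cross (d j) (V u 0)" using cross_vertex(1) by metis
  then show ?thesis by (rule that)
qed

section \<open>Tangential polygons\<close>

text \<open>The witnesses are the incircle: centre \<tau>, radius |\<mu>|, and the sign of \<mu> tells on which
  side of the oriented lines it lies.\<close>
lemma tangential_iff:
  "tangential n d h \<longleftrightarrow> (\<exists>\<mu> \<tau>. \<mu> \<noteq> 0 \<and> (\<forall>j<n. h j = cross (d j) \<tau> + \<mu> * norm (d j)))"
proof
  assume "tangential n d h"
  then obtain c r where r: "r > 0" and T: "\<forall>i<n. tangent_circle_line c r (line (d i) (h i))"
    and S: "(\<forall>i<n. sphere c r \<subseteq> {x. cross (d i) x \<ge> h i}) \<or> (\<forall>i<n. sphere c r \<subseteq> {x. cross (d i) x \<le> h i})"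
    unfolding tangential_def by blast
  have tan: "\<bar>cross (d j) c - h j\<bar> \<le> norm (d j) * r" if "j < n" for j
    using T that tangent_circle_line_abs_le by blast
  from S show "\<exists>\<mu> \<tau>. \<mu> \<noteq> 0 \<and> (\<forall>j<n. h j = cross (d j) \<tau> + \<mu> * norm (d j))"
  proof
    assume upper: "\<forall>i<n. sphere c r \<subseteq> {x. cross (d i) x \<ge> h i}"
    have "h j = cross (d j) c + (- r) * norm (d j)" if "j < n" for j
    proof -
      have "h j \<le> cross (d j) c - norm (d j) * r"
        using upper that direction_nonzero r sphere_subset_upper_halfplane_iff[of "d j" r c "h j"] by auto
      then show ?thesis using tan[OF that] by (auto simp: abs_le_iff mult.commute)
    qed
    then show ?thesis using r by (intro exI[of _ "- r"] exI[of _ c]) auto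
  next
    assume lower: "\<forall>i<n. sphere c r \<subseteq> {x. cross (d i) x \<le> h i}"
    have "h j = cross (d j) c + r * norm (d j)" if "j < n" for j
    proof -
      have "cross (d j) c + norm (d j) * r \<le> h j"
        using lower that direction_nonzero r sphere_subset_lower_halfplane_iff[of "d j" r c "h j"] by auto
      then show ?thesis using tan[OF that] by (auto simp: abs_le_iff mult.commute)
    qed
    then show ?thesis using r by (intro exI[of _ r] exI[of _ c]) auto
  qed
next
  assume "\<exists>\<mu> \<tau>. \<mu> \<noteq> 0 \<and> (\<forall>j<n. h j = cross (d j) \<tau> + \<mu> * norm (d j))"
  then obtain \<mu> \<tau> where \<mu>: "\<mu> \<noteq> 0" and H: "\<forall>j<n. h j = cross (d j) \<tau> + \<mu> * norm (d j)"
    by blast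
  have "\<forall>i<n. tangent_circle_line \<tau> \<bar>\<mu>\<bar> (line (d i) (h i))"
    using H direction_nonzero tangent_circle_line_offset by simp
  moreover have "(\<forall>i<n. sphere \<tau> \<bar>\<mu>\<bar> \<subseteq> {x. cross (d i) x \<ge> h i}) \<or>
      (\<forall>i<n. sphere \<tau> \<bar>\<mu>\<bar> \<subseteq> {x. cross (d i) x \<le> h i})"
  proof (cases "\<mu> < 0")
    case True
    then show ?thesis using H direction_nonzero by (simp add: sphere_subset_upper_halfplane_iff)
  next
    case False
    then show ?thesis using H direction_nonzero by (simp add: sphere_subset_lower_halfplane_iff)
  qed
  ultimately show "tangential n d h"
    unfolding tangential_def using \<mu> by (intro exI[of _ \<tau>] exI[of _ "\<bar>\<mu>\<bar>"]) auto
qed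

section \<open>Critical points of the perimeter on the area level set\<close>

lemma area_has_derivative:
  assumes der: "\<forall>i<n. ((\<lambda>t. \<gamma> t i) has_real_derivative g i) (at 0)"
    and start: "\<forall>i<n. \<gamma> 0 i = h i"
  shows "((\<lambda>t. area n d (\<gamma> t)) has_real_derivative 2 * area_form h g) (at 0)"
proof -
  have "((\<lambda>t. side_coeff (\<gamma> t) j) has_real_derivative side_coeff g j) (at 0)" for j
    by (rule has_real_derivative_linear_local[OF side_coeff_linear side_coeff_cong der]) auto
  then have "((\<lambda>t. \<Sum>j<n. side_coeff (\<gamma> t) j * \<gamma> t j) has_real_derivative
      (\<Sum>j<n. side_coeff g j * \<gamma> 0 j + g j * side_coeff (\<gamma> 0) j)) (at 0)"
    using der by (auto intro!: DERIV_sum DERIV_mult)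
  moreover have "(\<Sum>j<n. side_coeff g j * \<gamma> 0 j + g j * side_coeff (\<gamma> 0) j) =
      (\<Sum>j<n. side_coeff g j * h j) + (\<Sum>j<n. side_coeff h j * g j)"
    unfolding sum.distrib[symmetric]
    by (rule sum.cong) (use start side_coeff_cong[of "\<gamma> 0" h] in auto)
  ultimately have "((\<lambda>t. \<Sum>j<n. side_coeff (\<gamma> t) j * \<gamma> t j) has_real_derivative
      (\<Sum>j<n. side_coeff g j * h j) + (\<Sum>j<n. side_coeff h j * g j)) (at 0)"
    by simp
  then have "((\<lambda>t. -1/2 * (\<Sum>j<n. side_coeff (\<gamma> t) j * \<gamma> t j)) has_real_derivative
      -1/2 * ((\<Sum>j<n. side_coeff g j * h j) + (\<Sum>j<n. side_coeff h j * g j))) (at 0)"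
    by (rule DERIV_cmult)
  then show ?thesis
    using area_form_symmetric[of g h] by (simp add: area_eq_area_form area_form_def)
qed

lemma perimeter_has_derivative:
  assumes "\<forall>i<n. ((\<lambda>t. \<gamma> t i) has_real_derivative g i) (at 0)"
  shows "((\<lambda>t. perimeter n d (\<gamma> t)) has_real_derivative perimeter n d g) (at 0)"
  by (rule has_real_derivative_linear_local[OF perimeter_linear perimeter_cong assms])

text \<open>Every direction v of motion, corrected by a multiple of h, is tangent to a curve in the level
  set |area| = 1: rescale the straight line t \<mapsto> h + t v to unit area.\<close>
lemma level_curve_through:
  assumes "\<bar>area n d h\<bar> = 1"
  obtains \<gamma> where "\<forall>i. \<gamma> 0 i = h i"
    and "\<forall>i. ((\<lambda>t. \<gamma> t i) has_real_derivative v i - area n d h * area_form h v * h i) (at 0)"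
    and "eventually (\<lambda>t. \<bar>area n d (\<gamma> t)\<bar> = 1) (nhds 0)"
proof -
  define s where "s = area n d h"
  define q where "q = area_form h v"
  define \<phi> where "\<phi> t = 1 + 2 * s * q * t + s * area n d v * t\<^sup>2" for t :: real
  define r where "r t = 1 / sqrt (\<phi> t)" for t
  define \<gamma> where "\<gamma> t = (\<lambda>i. r t * (h i + t * v i))" for t
  have s2: "s * s = 1" using assms abs_mult_self_eq[of s] unfolding s_def by simp
  have r0: "r 0 = 1" by (simp add: r_def \<phi>_def)
  have "(r has_real_derivative - (s * q)) (at 0)"
    unfolding r_def[abs_def] \<phi>_def by (auto intro!: derivative_eq_intros)
  then have "((\<lambda>t. \<gamma> t i) has_real_derivative v i - s * q * h i) (at 0)" for i
    unfolding \<gamma>_def by (auto intro!: derivative_eq_intros simp: r0 algebra_simps)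
  moreover have "eventually (\<lambda>t. \<bar>area n d (\<gamma> t)\<bar> = 1) (nhds 0)"
  proof -
    have "isCont \<phi> 0" unfolding \<phi>_def by (intro continuous_intros)
    then have "(\<phi> \<longlongrightarrow> \<phi> 0) (nhds 0)" by (simp add: isCont_def tendsto_at_iff_tendsto_nhds)
    then have "eventually (\<lambda>t. \<phi> t > 0) (nhds 0)"
      by (rule order_tendstoD) (simp add: \<phi>_def)
    then show ?thesis
    proof eventually_elim
      case (elim t)
      have "s * \<phi> t - area n d (\<lambda>i. h i + t * v i) = (s * s - 1) * (2 * q * t + area n d v * t\<^sup>2)"
        unfolding area_add_scaled \<phi>_def by (simp add: s_def q_def algebra_simps)
      then have "area n d (\<lambda>i. h i + t * v i) = s * \<phi> t" using s2 by simp
      then have "area n d (\<gamma> t) = s"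
        unfolding \<gamma>_def area_scaleR using elim by (simp add: r_def power_divide)
      then show ?case using assms s_def by simp
    qed
  qed
  ultimately show ?thesis using that[of \<gamma>] by (simp add: \<gamma>_def r0 s_def q_def)
qed

lemma critical_point_perimeter_eq:
  assumes "\<bar>area n d h\<bar> = 1" and "critical_point n d h"
  shows "perimeter n d v = area n d h * area_form h v * perimeter n d h"
proof -
  define g where "g i = v i - area n d h * area_form h v * h i" for i
  obtain \<gamma> where start: "\<forall>i. \<gamma> 0 i = h i" and der: "\<forall>i. ((\<lambda>t. \<gamma> t i) has_real_derivative g i) (at 0)"
    and level: "eventually (\<lambda>t. \<bar>area n d (\<gamma> t)\<bar> = 1) (nhds 0)"
    using level_curve_through[OF assms(1)] unfolding g_def by blast
  have "((\<lambda>t. perimeter n d (\<gamma> t)) has_real_derivative 0) (at 0)"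
    using assms(2) start der level unfolding critical_point_def real_differentiable_def by blast
  moreover have "((\<lambda>t. perimeter n d (\<gamma> t)) has_real_derivative perimeter n d g) (at 0)"
    using der by (intro perimeter_has_derivative) simp
  ultimately have "perimeter n d g = 0" using DERIV_unique by blast
  moreover have "perimeter n d g = perimeter n d v - area n d h * area_form h v * perimeter n d h"
    using perimeter_linear[of 1 v "- (area n d h * area_form h v)" h] unfolding g_def by simp
  ultimately show ?thesis by simp
qed

text \<open>The components (d_j \<bullet> p) / |d_j| all have square |p|^2 - 1, so two of the three agree,
  which forces two of the directions to be parallel.\<close>
lemma not_all_cross_eq_norm: "\<not> (\<forall>j<3. cross (d j) p = norm (d j))"
proof
  assume H: "\<forall>j<3. cross (d j) p = norm (d j)"
  have dj: "d j \<noteq> 0" if "j < 3" for j using direction_nonzero n_ge_3 that by simp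
  have p0: "p \<noteq> 0" using H dj[of 0] by (auto simp: cross_def)
  define \<delta> where "\<delta> j = (d j \<bullet> p) / norm (d j)" for j
  have sq: "(\<delta> j)\<^sup>2 = (norm p)\<^sup>2 - 1" if j: "j < 3" for j
  proof -
    have "(norm (d j))\<^sup>2 + (d j \<bullet> p)\<^sup>2 = (norm (d j))\<^sup>2 * (norm p)\<^sup>2"
      using cross_sq_add_inner_sq[of "d j" p] H j by simp
    then show ?thesis using dj[OF j] unfolding \<delta>_def by (simp add: field_simps)
  qed
  have distinct: "\<delta> i \<noteq> \<delta> j" if ij: "i < 3" "j < 3" "i \<noteq> j" for i j
  proof
    assume "\<delta> i = \<delta> j"
    define z where "z = norm (d j) *\<^sub>R d i - norm (d i) *\<^sub>R d j"
    have "cross p z = 0"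
      using H ij by (simp add: z_def cross_commute[of p] cross_diff_left cross_scaleR_left)
    moreover have "p \<bullet> z = 0"
      using \<open>\<delta> i = \<delta> j\<close> dj[of i] dj[of j] ij
      unfolding z_def \<delta>_def by (simp add: inner_diff_right inner_commute field_simps)
    ultimately have "z = 0" using eq_0_if_cross_eq_0_inner_eq_0 p0 by blast
    then have "cross z (d j) = 0" by (simp add: cross_def)
    then have "norm (d j) * cross (d i) (d j) = 0"
      by (simp add: z_def cross_diff_left cross_scaleR_left cross_self)
    then show False using directions_nonparallel dj[of j] ij n_ge_3 by auto
  qed
  have "\<delta> 1 = \<delta> 0 \<or> \<delta> 1 = - \<delta> 0" "\<delta> 2 = \<delta> 0 \<or> \<delta> 2 = - \<delta> 0"
    using sq[of 0] sq[of 1] sq[of 2] power2_eq_iff[of "\<delta> 1" "\<delta> 0"] power2_eq_iff[of "\<delta> 2" "\<delta> 0"]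
    by auto
  then show False using distinct[of 1 0] distinct[of 2 0] distinct[of 2 1] by auto
qed

lemma critical_imp_tangential:
  assumes "\<bar>area n d h\<bar> = 1" and "critical_point n d h"
  shows "tangential n d h"
proof -
  define s where "s = area n d h"
  define P where "P = perimeter n d h"
  define u where "u i = 2 * norm (d i) + s * P * h i" for i
  have kernel: "area_form u v = 0" for v
  proof -
    have "area_form u v = 2 * area_form (\<lambda>i. norm (d i)) v + s * P * area_form h v"
      unfolding u_def by (rule area_form_linear_left)
    moreover have "perimeter n d v = -2 * area_form (\<lambda>i. norm (d i)) v"
      using perimeter_eq_area_form[of v] area_form_symmetric[of v] by simp
    moreover have "perimeter n d v = s * P * area_form h v"
      using critical_point_perimeter_eq[OF assms, of v] unfolding s_def P_def by simp
    ultimately show ?thesis by simp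
  qed
  obtain \<tau> where \<tau>: "\<forall>j<n. u j = cross (d j) \<tau>"
    using area_form_eq_0_imp_translation[OF kernel] by blast
  have "P \<noteq> 0"
  proof
    assume "P = 0"
    have "cross (d j) ((1/2) *\<^sub>R \<tau>) = norm (d j)" if "j < 3" for j
    proof -
      have "j < n" using that n_ge_3 by simp
      then show ?thesis
        using \<tau> \<open>P = 0\<close> unfolding u_def by (simp add: cross_scaleR_right mult.commute)
    qed
    then show False using not_all_cross_eq_norm by blast
  qed
  moreover have "s \<noteq> 0" using assms(1) s_def by auto
  ultimately have "h j = cross (d j) ((1 / (s * P)) *\<^sub>R \<tau>) + (- 2 / (s * P)) * norm (d j)" if "j < n" for j
  proof -
    have "2 * norm (d j) + s * P * h j = cross (d j) \<tau>" using \<tau> that unfolding u_def by simp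
    then show ?thesis using \<open>P \<noteq> 0\<close> \<open>s \<noteq> 0\<close> by (simp add: cross_scaleR_right field_simps)
  qed
  then show ?thesis
    unfolding tangential_iff using \<open>P \<noteq> 0\<close> \<open>s \<noteq> 0\<close> by (intro exI[of _ "- 2 / (s * P)"] exI) auto
qed

lemma area_form_eq_0_along_level_curve:
  assumes start: "\<forall>i<n. \<gamma> 0 i = h i"
    and der: "\<forall>i<n. ((\<lambda>t. \<gamma> t i) has_real_derivative g i) (at 0)"
    and level: "eventually (\<lambda>t. \<bar>area n d (\<gamma> t)\<bar> = 1) (nhds 0)"
  shows "area_form h g = 0"
proof -
  have A0: "area n d (\<gamma> 0) = area n d h" using start by (rule area_cong)
  have dA: "((\<lambda>t. area n d (\<gamma> t)) has_real_derivative 2 * area_form h g) (at 0)"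
    using der start by (rule area_has_derivative)
  have "eventually (\<lambda>t. (area n d (\<gamma> t))\<^sup>2 = 1) (nhds 0)"
    using level by eventually_elim (simp add: abs_square_eq_1)
  then have "((\<lambda>t. (area n d (\<gamma> t))\<^sup>2) has_real_derivative 0) (at 0)"
    using DERIV_cong_ev[of 0 0 _ "\<lambda>_. 1" 0 0] by simp
  moreover have "((\<lambda>t. (area n d (\<gamma> t))\<^sup>2) has_real_derivative
      2 * area n d h * (2 * area_form h g)) (at 0)"
    using DERIV_power[OF dA, of 2] A0 by (simp add: mult.commute)
  ultimately have "2 * area n d h * (2 * area_form h g) = 0" using DERIV_unique by blast
  moreover have "area n d h \<noteq> 0" using eventually_nhds_x_imp_x[OF level] A0 by auto
  ultimately show ?thesis by simp
qed

lemma tangential_imp_critical: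
  assumes "tangential n d h"
  shows "critical_point n d h"
  unfolding critical_point_def
proof (intro allI impI)
  fix \<gamma> :: "real \<Rightarrow> nat \<Rightarrow> real"
  assume start: "\<forall>i<n. \<gamma> 0 i = h i" and diff: "\<forall>i<n. (\<lambda>t. \<gamma> t i) differentiable (at 0)"
    and level: "eventually (\<lambda>t. \<bar>area n d (\<gamma> t)\<bar> = 1) (nhds 0)"
  obtain \<mu> \<tau> where "\<mu> \<noteq> 0" and H: "\<forall>j<n. h j = cross (d j) \<tau> + \<mu> * norm (d j)"
    using assms unfolding tangential_iff by auto
  define g where "g i = deriv (\<lambda>t. \<gamma> t i) 0" for i
  have der: "\<forall>i<n. ((\<lambda>t. \<gamma> t i) has_real_derivative g i) (at 0)"
    using diff DERIV_deriv_iff_real_differentiable unfolding g_def by blast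
  have "0 = area_form h g"
    using area_form_eq_0_along_level_curve[OF start der level] by simp
  also have "\<dots> = area_form (\<lambda>j. 1 * cross (d j) \<tau> + \<mu> * norm (d j)) g"
    using H by (intro area_form_cong_left) simp
  also have "\<dots> = \<mu> * area_form (\<lambda>j. norm (d j)) g"
    unfolding area_form_linear_left area_form_translation by simp
  finally have "perimeter n d g = 0"
    using \<open>\<mu> \<noteq> 0\<close> area_form_symmetric perimeter_eq_area_form by simp
  then show "((\<lambda>t. perimeter n d (\<gamma> t)) has_real_derivative 0) (at 0)"
    using perimeter_has_derivative[OF der] by simp
qed

end

theorem mainTheorem5:
  fixes n :: nat and d :: "nat \<Rightarrow> real \<times> real" and h :: "nat \<Rightarrow> real"
  assumes "n \<ge> 3"
    and "\<forall>i<n. d i \<noteq> 0"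
    and "\<forall>i<n. \<forall>j<n. i \<noteq> j \<longrightarrow> cross (d i) (d j) \<noteq> 0"
    and "\<bar>area n d h\<bar> = 1"
  shows "critical_point n d h \<longleftrightarrow> tangential n d h"
proof -
  interpret nonparallel_directions n d
    using assms(1-3) by unfold_locales
  show ?thesis
    using critical_imp_tangential tangential_imp_critical assms(4) by blast
qed

end
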